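(* Let $n\ge1$ and $1\le k\le n$. The reverse-admissible $k\times k$ minors $(I_2,I_1)$ are in a weight preserving bijection with the single column symplectic PBW tableaux of length $k$.
   Context: Let $\bar i:=2n+1-i$ and $\mathcal N=\{1<\dots<n<\bar n<\dots<\bar1\}$; $\varepsilon_1,\dots,\varepsilon_n$ is the standard basis of the dual Cartan of $\mathfrak{sp}_{2n}$. A $k\times k$ minor is a pair $(I_2,I_1)$ of subsets of $\{1,\dots,n\}$ with $|I_1|+|I_2|=k$; its entries are the elements $i\in I_1$ and $\bar i$ for $i\in I_2$, and its weight is $\sum_{i\in I_1}\varepsilon_i-\sum_{i\in I_2}\varepsilon_i$. With $\Gamma=I_1\cap I_2=\{\gamma_1<\dots<\gamma_\lambda\}$, the minor is reverse-admissible if there is $T=\{\tau_1<\dots<\tau_\lambda\}\subset\{1,\dots,n\}\setminus(I_1\cup I_2)$ with $|T|=|\Gamma|$ and $\tau_i\le\gamma_i$ for all $i$. A single column symplectic PBW tableau of length $k$ is a column of $k$ boxes with entries $T_1,\dots,T_k\in\mathcal N$ (top to bottom) such that: (i) if $T_i\le k$ then $T_i=i$; (ii) if $i_1<i_2$ and $T_{i_1}\ne i_1$ then $T_{i_1}>T_{i_2}$; (iii) if $T_i=i$ and $T_{i'}=\bar i$ for some $i'$, then $i'<i$, whenever $i<k$. Its weight is $\sum_{i\le n\text{ appearing}}\varepsilon_i-\sum_{j\le n:\ \bar j\text{ appearing}}\varepsilon_j$. *)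

theory Defs
  imports Main
begin

text \<open>The ordered alphabet N = {1 < ... < n < bar n < ... < bar 1} is encoded as the
naturals {1..2n} with their usual order, where bar i = 2n+1-i.\<close>

definition bar :: "nat \<Rightarrow> nat \<Rightarrow> nat" where
  "bar n i = 2*n + 1 - i"

text \<open>Weights are functions nat => int: the coefficient of epsilon_j for j in {1..n},
and 0 elsewhere.\<close>

definition minors :: "nat \<Rightarrow> nat \<Rightarrow> (nat set \<times> nat set) set" where
  "minors n k = {(I2, I1). I1 \<subseteq> {1..n} \<and> I2 \<subseteq> {1..n} \<and> card I1 + card I2 = k}"

definition minor_weight :: "nat \<Rightarrow> nat set \<times> nat set \<Rightarrow> nat \<Rightarrow> int" where
  "minor_weight n M j = (case M of (I2, I1) \<Rightarrow>
     (if j \<in> {1..n} then (if j \<in> I1 then 1 else 0) - (if j \<in> I2 then 1 else 0) else 0))"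

definition reverse_admissible :: "nat \<Rightarrow> nat set \<times> nat set \<Rightarrow> bool" where
  "reverse_admissible n M = (case M of (I2, I1) \<Rightarrow>
     (let \<Gamma> = I1 \<inter> I2 in
      \<exists>T. T \<subseteq> {1..n} - (I1 \<union> I2) \<and> card T = card \<Gamma> \<and>
          (\<forall>i < card \<Gamma>. sorted_list_of_set T ! i \<le> sorted_list_of_set \<Gamma> ! i)))"

definition rev_adm_minors :: "nat \<Rightarrow> nat \<Rightarrow> (nat set \<times> nat set) set" where
  "rev_adm_minors n k = {M \<in> minors n k. reverse_admissible n M}"

text \<open>A single column of length k is a list of length k; the entry T_i (1-based, top to
bottom) is the list element at position i-1.\<close>
definition pbw_column :: "nat \<Rightarrow> nat \<Rightarrow> nat list \<Rightarrow> bool" where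
  "pbw_column n k T \<longleftrightarrow>
     length T = k \<and>
     (\<forall>i\<in>{1..k}. T ! (i - 1) \<in> {1..2*n}) \<and>
     (\<forall>i\<in>{1..k}. T ! (i - 1) \<le> k \<longrightarrow> T ! (i - 1) = i) \<and>
     (\<forall>i1\<in>{1..k}. \<forall>i2\<in>{1..k}. i1 < i2 \<and> T ! (i1 - 1) \<noteq> i1 \<longrightarrow> T ! (i1 - 1) > T ! (i2 - 1)) \<and>
     (\<forall>i\<in>{1..k}. \<forall>i'\<in>{1..k}. i < k \<and> T ! (i - 1) = i \<and> T ! (i' - 1) = bar n i \<longrightarrow> i' < i)"

definition pbw_columns :: "nat \<Rightarrow> nat \<Rightarrow> nat list set" where
  "pbw_columns n k = {T. pbw_column n k T}"

definition column_weight :: "nat \<Rightarrow> nat list \<Rightarrow> nat \<Rightarrow> int" where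
  "column_weight n T j =
     (if j \<in> {1..n} then (if j \<in> set T then 1 else 0) - (if bar n j \<in> set T then 1 else 0) else 0)"

end

theory Submission
  imports Defs
begin

text \<open>A single column PBW tableau is determined by its set S of entries: by (i) and (ii),
  row p holds p exactly when p is in S, and the other rows carry the entries larger than k in
  decreasing order. Condition (iii) thereby becomes a counting condition on S.

  The minor (I2, I1) has the entry set S = I1 \<union> bar(I2). Reverse admissibility asks for
  indices outside I1 \<union> I2 dominating \<Gamma> = I1 \<inter> I2 from below; by a Hall-type argument
  (taking the smallest available indices) this holds iff
  #{x \<in> I1. x \<le> g} + #{x \<in> I2. x \<le> g} \<le> g for every g in \<Gamma>. This is automatic for
  g \<ge> k, and for g < k it is exactly the counting form of (iii) for S. The weights agree
  since both only depend on S.\<close>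

section \<open>Ranks in sorted enumerations\<close>

lemma set_take_sorted_list_of_set:
  fixes A :: "'a::linorder set"
  assumes "finite A" "j < card A"
  shows "set (take j (sorted_list_of_set A)) = {x \<in> A. x < sorted_list_of_set A ! j}"
proof -
  have split: "{x \<in> set (ys @ y # zs). x < y} = set ys" if "sorted_wrt (<) (ys @ y # zs)"
    for ys zs and y :: 'a
    using that by (auto simp: sorted_wrt_append dest: less_asym)
  let ?xs = "sorted_list_of_set A"
  have xs: "?xs = take j ?xs @ ?xs ! j # drop (Suc j) ?xs"
    using assms by (simp add: id_take_nth_drop)
  have "sorted_wrt (<) ?xs" "set ?xs = A"
    using assms(1) by simp_all
  then show ?thesis
    using split[of "take j ?xs" "?xs ! j" "drop (Suc j) ?xs"] xs by metis
qed

lemma card_less_sorted_list_of_set_nth: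
  fixes A :: "'a::linorder set"
  assumes "finite A" "j < card A"
  shows "card {x \<in> A. x < sorted_list_of_set A ! j} = j"
  using assms distinct_card[of "take j (sorted_list_of_set A)"]
  by (simp add: set_take_sorted_list_of_set)

lemma card_le_sorted_list_of_set_nth:
  fixes A :: "'a::linorder set"
  assumes "finite A" "j < card A"
  shows "card {x \<in> A. x \<le> sorted_list_of_set A ! j} = Suc j"
proof -
  have "sorted_list_of_set A ! j \<in> A"
    using assms by (metis length_sorted_list_of_set nth_mem set_sorted_list_of_set)
  then have "{x \<in> A. x \<le> sorted_list_of_set A ! j} =
      insert (sorted_list_of_set A ! j) {x \<in> A. x < sorted_list_of_set A ! j}"
    by auto
  then show ?thesis
    using assms card_less_sorted_list_of_set_nth by simp
qed

lemma sorted_list_of_set_nth_le_iff: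
  fixes A :: "'a::linorder set"
  assumes "finite A" "j < card A"
  shows "sorted_list_of_set A ! j \<le> g \<longleftrightarrow> j < card {x \<in> A. x \<le> g}"
proof
  assume "sorted_list_of_set A ! j \<le> g"
  then have "card {x \<in> A. x \<le> sorted_list_of_set A ! j} \<le> card {x \<in> A. x \<le> g}"
    using assms(1) by (intro card_mono) auto
  then show "j < card {x \<in> A. x \<le> g}"
    using card_le_sorted_list_of_set_nth[OF assms] by simp
next
  assume "j < card {x \<in> A. x \<le> g}"
  show "sorted_list_of_set A ! j \<le> g"
  proof (rule ccontr)
    assume "\<not> sorted_list_of_set A ! j \<le> g"
    then have "card {x \<in> A. x \<le> g} \<le> card {x \<in> A. x < sorted_list_of_set A ! j}"
      using assms(1) by (intro card_mono) auto
    then show False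
      using \<open>j < card {x \<in> A. x \<le> g}\<close> card_less_sorted_list_of_set_nth[OF assms] by simp
  qed
qed

lemma card_greater_rev_sorted_list_of_set_nth:
  fixes A :: "'a::linorder set"
  assumes "finite A" "r < card A"
  shows "card {x \<in> A. rev (sorted_list_of_set A) ! r < x} = r"
proof -
  define m where "m = card A - Suc r"
  have m: "m < card A" "rev (sorted_list_of_set A) ! r = sorted_list_of_set A ! m"
    using assms by (simp_all add: m_def rev_nth)
  have "{x \<in> A. sorted_list_of_set A ! m < x} =
      A - {x \<in> A. x \<le> sorted_list_of_set A ! m}"
    by auto
  then have "card {x \<in> A. sorted_list_of_set A ! m < x} = card A - Suc m"
    using assms(1) card_le_sorted_list_of_set_nth[OF assms(1) m(1)]
    by (simp add: card_Diff_subset)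
  then show ?thesis
    using m assms(2) by (simp add: m_def)
qed

lemma rev_sorted_list_of_set_nth_card_greater:
  fixes A :: "'a::linorder set"
  assumes "finite A" "x \<in> A"
  shows "rev (sorted_list_of_set A) ! card {z \<in> A. x < z} = x"
proof -
  obtain r where "r < card A" "x = rev (sorted_list_of_set A) ! r"
    using assms by (metis in_set_conv_nth length_rev length_sorted_list_of_set
        set_rev set_sorted_list_of_set)
  then show ?thesis
    using card_greater_rev_sorted_list_of_set_nth[OF assms(1)] by simp
qed

lemma card_missing_below_strict_mono:
  assumes "1 \<le> p1" "p1 < p2" "p1 \<notin> S"
  shows "card {q \<in> {1..<p1}. q \<notin> S} < card {q \<in> {1..<p2}. q \<notin> (S::nat set)}"
proof (rule psubset_card_mono)
  have "p1 \<in> {q \<in> {1..<p2}. q \<notin> S}" "p1 \<notin> {q \<in> {1..<p1}. q \<notin> S}"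
    using assms by simp_all
  moreover have "{q \<in> {1..<p1}. q \<notin> S} \<subseteq> {q \<in> {1..<p2}. q \<notin> S}"
    using assms by auto
  ultimately show "{q \<in> {1..<p1}. q \<notin> S} \<subset> {q \<in> {1..<p2}. q \<notin> S}"
    by blast
qed simp

section \<open>A Hall-type criterion for reverse admissibility\<close>

lemma card_le_if_sorted_list_of_set_dominated:
  fixes G T :: "'a::linorder set"
  assumes "finite G" "finite T" "card T = card G"
    and dominated: "\<forall>i < card G. sorted_list_of_set T ! i \<le> sorted_list_of_set G ! i"
    and "g \<in> G"
  shows "card {x \<in> G. x \<le> g} \<le> card {x \<in> T. x \<le> g}"
proof -
  obtain j where j: "j < card G" "g = sorted_list_of_set G ! j"
    using assms(1,5) by (metis in_set_conv_nth length_sorted_list_of_set set_sorted_list_of_set)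
  then have "j < card {x \<in> T. x \<le> g}"
    using sorted_list_of_set_nth_le_iff[OF assms(2), of j g] assms(3) dominated by simp
  then show ?thesis
    using card_le_sorted_list_of_set_nth[OF assms(1) j(1)] j(2) by simp
qed

lemma ex_sorted_list_of_set_dominated_subset:
  fixes F G :: "'a::linorder set"
  assumes F: "finite F" and G: "finite G"
    and count: "\<forall>g \<in> G. card {x \<in> G. x \<le> g} \<le> card {x \<in> F. x \<le> g}"
  shows "\<exists>T \<subseteq> F. card T = card G \<and>
           (\<forall>i < card G. sorted_list_of_set T ! i \<le> sorted_list_of_set G ! i)"
proof -
  have dominated: "i < card F \<and> sorted_list_of_set F ! i \<le> sorted_list_of_set G ! i"
    if "i < card G" for i
  proof -
    have "sorted_list_of_set G ! i \<in> G"
      using G that by (metis length_sorted_list_of_set nth_mem set_sorted_list_of_set)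
    then have "i < card {x \<in> F. x \<le> sorted_list_of_set G ! i}"
      using count card_le_sorted_list_of_set_nth[OF G that] by fastforce
    moreover have "card {x \<in> F. x \<le> sorted_list_of_set G ! i} \<le> card F"
      using F by (intro card_mono) auto
    ultimately show ?thesis
      using sorted_list_of_set_nth_le_iff[OF F] by auto
  qed
  have "card G \<le> card F"
  proof (cases "card G")
    case (Suc m)
    then show ?thesis using dominated[of m] by simp
  qed simp
  define ts where "ts = take (card G) (sorted_list_of_set F)"
  have "sorted_list_of_set (set ts) = ts"
    unfolding ts_def by (metis sorted_list_of_set.idem_if_sorted_distinct distinct_take
        distinct_sorted_list_of_set sorted_sorted_list_of_set sorted_wrt_take)
  moreover have "set ts \<subseteq> F" "card (set ts) = card G"
    using F \<open>card G \<le> card F\<close> unfolding ts_def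
    by (auto simp: distinct_card dest: in_set_takeD)
  ultimately show ?thesis
    using dominated by (intro exI[of _ "set ts"]) (simp add: ts_def)
qed

lemma ex_subset_sorted_dominated_iff:
  fixes F G :: "'a::linorder set"
  assumes "finite F" "finite G"
  shows "(\<exists>T \<subseteq> F. card T = card G \<and>
            (\<forall>i < card G. sorted_list_of_set T ! i \<le> sorted_list_of_set G ! i))
     \<longleftrightarrow> (\<forall>g \<in> G. card {x \<in> G. x \<le> g} \<le> card {x \<in> F. x \<le> g})"
proof
  assume "\<exists>T \<subseteq> F. card T = card G \<and>
            (\<forall>i < card G. sorted_list_of_set T ! i \<le> sorted_list_of_set G ! i)"
  then obtain T where T: "T \<subseteq> F" "card T = card G"
      "\<forall>i < card G. sorted_list_of_set T ! i \<le> sorted_list_of_set G ! i"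
    by blast
  then have "finite T"
    using assms(1) finite_subset by blast
  show "\<forall>g \<in> G. card {x \<in> G. x \<le> g} \<le> card {x \<in> F. x \<le> g}"
  proof
    fix g assume "g \<in> G"
    then have "card {x \<in> G. x \<le> g} \<le> card {x \<in> T. x \<le> g}"
      using card_le_if_sorted_list_of_set_dominated[OF assms(2) \<open>finite T\<close> T(2,3)] by blast
    also have "\<dots> \<le> card {x \<in> F. x \<le> g}"
      using T(1) assms(1) by (intro card_mono) auto
    finally show "card {x \<in> G. x \<le> g} \<le> card {x \<in> F. x \<le> g}" .
  qed
qed (use ex_sorted_list_of_set_dominated_subset assms in blast)

section \<open>Entry sets of minors\<close>

lemma bar_bar: "x \<le> 2 * n + 1 \<Longrightarrow> bar n (bar n x) = x"
  by (simp add: bar_def)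

lemma bar_less_bar_iff: "i \<le> 2 * n + 1 \<Longrightarrow> j \<le> 2 * n + 1 \<Longrightarrow> bar n i < bar n j \<longleftrightarrow> j < i"
  by (auto simp: bar_def)

lemma bar_mem_upper_half: "i \<in> {1..n} \<Longrightarrow> bar n i \<in> {n<..2 * n}"
  by (auto simp: bar_def)

lemma inj_on_bar: "inj_on (bar n) {..2 * n + 1}"
  by (metis atMost_iff bar_bar inj_on_inverseI)

fun minor_entries :: "nat \<Rightarrow> nat set \<times> nat set \<Rightarrow> nat set" where
  "minor_entries n (I2, I1) = I1 \<union> bar n ` I2"

context
  fixes n :: nat and I1 I2 :: "nat set"
  assumes I1: "I1 \<subseteq> {1..n}" and I2: "I2 \<subseteq> {1..n}"
begin

lemma bar_image_subset: "bar n ` I2 \<subseteq> {n<..2 * n}"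
  using I2 bar_mem_upper_half by blast

lemma mem_minor_entries_iff: "i \<le> n \<Longrightarrow> i \<in> minor_entries n (I2, I1) \<longleftrightarrow> i \<in> I1"
  using bar_image_subset by auto

lemma bar_mem_minor_entries_iff:
  assumes "i \<in> {1..n}"
  shows "bar n i \<in> minor_entries n (I2, I1) \<longleftrightarrow> i \<in> I2"
proof -
  have "bar n i \<notin> I1"
    using I1 bar_mem_upper_half[OF assms] by auto
  moreover have "bar n i = bar n j \<longleftrightarrow> i = j" if "j \<in> I2" for j
    using I2 assms that inj_on_bar[of n] by (auto simp: inj_on_eq_iff)
  ultimately show ?thesis
    by auto
qed

lemma minor_entries_subset: "minor_entries n (I2, I1) \<subseteq> {1..2 * n}"
  using I1 bar_image_subset by auto

lemma card_minor_entries: "card (minor_entries n (I2, I1)) = card I1 + card I2"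
proof -
  have "I2 \<subseteq> {..2 * n + 1}"
    using I2 by auto
  then have inj: "inj_on (bar n) I2"
    using inj_on_subset[OF inj_on_bar[of n]] by blast
  have "{1..n} \<inter> {n<..2 * n} = {}"
    by auto
  then have disjoint: "I1 \<inter> bar n ` I2 = {}"
    using I1 bar_image_subset by blast
  have "finite I1" "finite I2"
    using I1 I2 finite_subset by blast+
  then show ?thesis
    using inj disjoint by (simp add: card_Un_disjoint card_image)
qed

lemma card_common_le_card_missing_iff:
  assumes "g \<le> n"
  shows "card {x \<in> I1 \<inter> I2. x \<le> g} \<le> card {x \<in> {1..n} - (I1 \<union> I2). x \<le> g}
     \<longleftrightarrow> card {x \<in> I1. x \<le> g} + card {x \<in> I2. x \<le> g} \<le> g"
proof -
  define A1 where "A1 = {x \<in> I1. x \<le> g}"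
  define A2 where "A2 = {x \<in> I2. x \<le> g}"
  have A: "A1 \<subseteq> {1..g}" "A2 \<subseteq> {1..g}" and fin: "finite A1" "finite A2"
    using I1 I2 finite_subset[of _ "{1..g}"] by (auto simp: A1_def A2_def)
  have "{x \<in> I1 \<inter> I2. x \<le> g} = A1 \<inter> A2"
    by (auto simp: A1_def A2_def)
  moreover have "{x \<in> {1..n} - (I1 \<union> I2). x \<le> g} = {1..g} - (A1 \<union> A2)"
    using assms by (auto simp: A1_def A2_def)
  moreover have "card (A1 \<union> A2) \<le> g"
    using A card_mono[of "{1..g}" "A1 \<union> A2"] by simp
  moreover have "card A1 + card A2 = card (A1 \<union> A2) + card (A1 \<inter> A2)"
    using fin card_Un_Int by blast
  ultimately show ?thesis
    using A by (simp add: card_Diff_subset fin flip: A1_def A2_def) linarith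
qed

lemma card_greater_bar_minor_entries:
  assumes i: "i \<in> {1..n}"
  shows "card {x \<in> minor_entries n (I2, I1). bar n i < x} = card {j \<in> I2. j < i}"
proof -
  have "{x \<in> minor_entries n (I2, I1). bar n i < x} = bar n ` {j \<in> I2. j < i}"
  proof (intro equalityI subsetI)
    fix x assume x: "x \<in> {x \<in> minor_entries n (I2, I1). bar n i < x}"
    have "n < x"
      using x bar_mem_upper_half[OF i] by auto
    then have "x \<notin> I1"
      using I1 by (meson atLeastAtMost_iff not_le subsetD)
    then obtain j where j: "j \<in> I2" "x = bar n j"
      using x by auto
    then have "j < i"
      using x I2 i bar_less_bar_iff[of i n j] by auto
    then show "x \<in> bar n ` {j \<in> I2. j < i}"
      using j by blast
  next
    fix x assume "x \<in> bar n ` {j \<in> I2. j < i}"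
    then obtain j where "j \<in> I2" "j < i" "x = bar n j"
      by blast
    then show "x \<in> {x \<in> minor_entries n (I2, I1). bar n i < x}"
      using I2 i bar_less_bar_iff[of i n j] by auto
  qed
  moreover have "{j \<in> I2. j < i} \<subseteq> {..2 * n + 1}"
    using I2 by auto
  then have "inj_on (bar n) {j \<in> I2. j < i}"
    by (rule inj_on_subset[OF inj_on_bar])
  ultimately show ?thesis
    by (simp add: card_image)
qed

lemma card_missing_below_minor_entries:
  assumes "i \<in> {1..n}"
  shows "card {q \<in> {1..<i}. q \<notin> minor_entries n (I2, I1)} = i - 1 - card {x \<in> I1. x < i}"
proof -
  have "q \<in> minor_entries n (I2, I1) \<longleftrightarrow> q \<in> I1" if "q < i" for q
    using mem_minor_entries_iff[of q] that assms by simp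
  then have "{q \<in> {1..<i}. q \<notin> minor_entries n (I2, I1)} = {1..<i} - {x \<in> I1. x < i}"
    by (auto simp del: minor_entries.simps)
  moreover have "{x \<in> I1. x < i} \<subseteq> {1..<i}"
    using I1 by auto
  ultimately show ?thesis
    by (simp add: card_Diff_subset finite_subset)
qed

lemma pbw_condition_minor_entries_iff:
  assumes i: "i \<in> I1 \<inter> I2"
  shows "card {x \<in> minor_entries n (I2, I1). bar n i < x}
      < card {q \<in> {1..<i}. q \<notin> minor_entries n (I2, I1)}
    \<longleftrightarrow> card {x \<in> I1. x \<le> i} + card {x \<in> I2. x \<le> i} \<le> i"
proof -
  have iN: "i \<in> {1..n}"
    using i I1 by auto
  have fin: "finite {x \<in> I1. x < i}" "finite {x \<in> I2. x < i}"
    using I1 I2 finite_subset by (simp_all add: finite_subset)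
  have "{x \<in> I1. x \<le> i} = insert i {x \<in> I1. x < i}" "{x \<in> I2. x \<le> i} = insert i {x \<in> I2. x < i}"
    using i by auto
  then have le: "card {x \<in> I1. x \<le> i} = Suc (card {x \<in> I1. x < i})"
      "card {x \<in> I2. x \<le> i} = Suc (card {x \<in> I2. x < i})"
    using fin by simp_all
  have "{x \<in> I1. x < i} \<subseteq> {1..<i}"
    using I1 by auto
  then have "card {x \<in> I1. x < i} \<le> i - 1"
    using card_mono[of "{1..<i}"] by fastforce
  then show ?thesis
    using card_greater_bar_minor_entries[OF iN] card_missing_below_minor_entries[OF iN] le
    by linarith
qed

end

lemma minor_entries_preimage:
  assumes "S \<subseteq> {1..2 * n}"
  shows "minor_entries n ({i \<in> {1..n}. bar n i \<in> S}, S \<inter> {1..n}) = S"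
proof -
  have "x \<in> S \<inter> {1..n} \<union> bar n ` {i \<in> {1..n}. bar n i \<in> S}" if "x \<in> S" for x
  proof (cases "x \<le> n")
    case False
    then have "x \<in> bar n ` {i \<in> {1..n}. bar n i \<in> S}"
      using assms that bar_bar[of x n] by (intro image_eqI[of _ _ "bar n x"]) (auto simp: bar_def)
    then show ?thesis
      by blast
  qed (use assms that in auto)
  moreover have "S \<inter> {1..n} \<union> bar n ` {i \<in> {1..n}. bar n i \<in> S} \<subseteq> S"
    by auto
  ultimately show ?thesis
    by (simp only: minor_entries.simps) blast
qed

lemma bij_betw_minor_entries:
  "bij_betw (minor_entries n) (minors n k) {S. S \<subseteq> {1..2 * n} \<and> card S = k}"
proof (rule bij_betw_byWitness[where f' = "\<lambda>S. ({i \<in> {1..n}. bar n i \<in> S}, S \<inter> {1..n})"])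
  show "\<forall>M \<in> minors n k. ({i \<in> {1..n}. bar n i \<in> minor_entries n M}, minor_entries n M \<inter> {1..n}) = M"
    using mem_minor_entries_iff bar_mem_minor_entries_iff by (fastforce simp: minors_def)
  show "\<forall>S \<in> {S. S \<subseteq> {1..2 * n} \<and> card S = k}. minor_entries n ({i \<in> {1..n}. bar n i \<in> S}, S \<inter> {1..n}) = S"
    using minor_entries_preimage by blast
  show "minor_entries n ` minors n k \<subseteq> {S. S \<subseteq> {1..2 * n} \<and> card S = k}"
    using minor_entries_subset card_minor_entries
    by (force simp: minors_def simp del: minor_entries.simps)
  show "(\<lambda>S. ({i \<in> {1..n}. bar n i \<in> S}, S \<inter> {1..n})) ` {S. S \<subseteq> {1..2 * n} \<and> card S = k} \<subseteq> minors n k"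
  proof
    fix M assume "M \<in> (\<lambda>S. ({i \<in> {1..n}. bar n i \<in> S}, S \<inter> {1..n})) ` {S. S \<subseteq> {1..2 * n} \<and> card S = k}"
    then obtain S where S: "S \<subseteq> {1..2 * n}" "card S = k"
      and M: "M = ({i \<in> {1..n}. bar n i \<in> S}, S \<inter> {1..n})"
      by blast
    have "card (minor_entries n ({i \<in> {1..n}. bar n i \<in> S}, S \<inter> {1..n}))
        = card (S \<inter> {1..n}) + card {i \<in> {1..n}. bar n i \<in> S}"
      by (rule card_minor_entries) auto
    then have "card (S \<inter> {1..n}) + card {i \<in> {1..n}. bar n i \<in> S} = k"
      using minor_entries_preimage[OF S(1)] S(2) by simp
    then show "M \<in> minors n k"
      using M by (auto simp: minors_def)
  qed
qed

lemma reverse_admissible_iff_card_le: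
  assumes "(I2, I1) \<in> minors n k"
  shows "reverse_admissible n (I2, I1) \<longleftrightarrow>
    (\<forall>g \<in> I1 \<inter> I2. g < k \<longrightarrow> card {x \<in> I1. x \<le> g} + card {x \<in> I2. x \<le> g} \<le> g)"
proof -
  have I: "I1 \<subseteq> {1..n}" "I2 \<subseteq> {1..n}" "card I1 + card I2 = k"
    using assms by (auto simp: minors_def)
  have large: "card {x \<in> I1. x \<le> g} + card {x \<in> I2. x \<le> g} \<le> g" if "k \<le> g" for g
    using I that card_mono[of I1 "{x \<in> I1. x \<le> g}"] card_mono[of I2 "{x \<in> I2. x \<le> g}"]
      finite_subset[of _ "{1..n}"] by auto
  have "reverse_admissible n (I2, I1) \<longleftrightarrow>
      (\<forall>g \<in> I1 \<inter> I2. card {x \<in> I1 \<inter> I2. x \<le> g} \<le> card {x \<in> {1..n} - (I1 \<union> I2). x \<le> g})"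
    unfolding reverse_admissible_def Let_def
    using I finite_subset[of "I1 \<inter> I2" "{1..n}"]
    by (subst ex_subset_sorted_dominated_iff[symmetric]) auto
  also have "\<dots> \<longleftrightarrow> (\<forall>g \<in> I1 \<inter> I2. card {x \<in> I1. x \<le> g} + card {x \<in> I2. x \<le> g} \<le> g)"
  proof (intro ball_cong[OF refl])
    fix g assume "g \<in> I1 \<inter> I2"
    then show "card {x \<in> I1 \<inter> I2. x \<le> g} \<le> card {x \<in> {1..n} - (I1 \<union> I2). x \<le> g}
        \<longleftrightarrow> card {x \<in> I1. x \<le> g} + card {x \<in> I2. x \<le> g} \<le> g"
      using I(1) by (intro card_common_le_card_missing_iff[OF I(1,2)]) auto
  qed
  finally show ?thesis
    using large leI by blast
qed

section \<open>Single column PBW tableaux and their entry sets\<close>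

context
  fixes n k :: nat and T :: "nat list"
  assumes column: "pbw_column n k T"
begin

lemma length_pbw_column: "length T = k"
  using column by (simp add: pbw_column_def)

lemma mem_set_pbw_column_iff: "x \<in> set T \<longleftrightarrow> (\<exists>p \<in> {1..k}. x = T ! (p - 1))"
proof
  assume "x \<in> set T"
  then obtain j where "j < k" "x = T ! j"
    using length_pbw_column by (auto simp: in_set_conv_nth)
  then show "\<exists>p \<in> {1..k}. x = T ! (p - 1)"
    by (intro bexI[of _ "Suc j"]) auto
next
  assume "\<exists>p \<in> {1..k}. x = T ! (p - 1)"
  then show "x \<in> set T"
    using length_pbw_column by auto
qed

lemma pbw_column_nth_range: "p \<in> {1..k} \<Longrightarrow> T ! (p - 1) \<in> {1..2 * n}"
  using column by (simp add: pbw_column_def)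

lemma pbw_column_unfixed_greater:
  assumes "p \<in> {1..k}" "T ! (p - 1) \<noteq> p"
  shows "k < T ! (p - 1)"
proof -
  have "T ! (p - 1) \<le> k \<longrightarrow> T ! (p - 1) = p"
    using column assms(1) unfolding pbw_column_def by blast
  then show ?thesis
    using assms(2) by linarith
qed

lemma pbw_column_unfixed_decreasing:
  "p1 \<in> {1..k} \<Longrightarrow> p2 \<in> {1..k} \<Longrightarrow> p1 < p2 \<Longrightarrow> T ! (p1 - 1) \<noteq> p1 \<Longrightarrow>
    T ! (p2 - 1) < T ! (p1 - 1)"
  using column unfolding pbw_column_def by blast

lemma pbw_column_bar_above:
  "i \<in> {1..<k} \<Longrightarrow> T ! (i - 1) = i \<Longrightarrow> i' \<in> {1..k} \<Longrightarrow> T ! (i' - 1) = bar n i \<Longrightarrow> i' < i"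
  using column unfolding pbw_column_def by fastforce

lemma pbw_column_fixed_iff:
  assumes q: "q \<in> {1..k}"
  shows "q \<in> set T \<longleftrightarrow> T ! (q - 1) = q"
proof
  assume "q \<in> set T"
  then obtain r where r: "r \<in> {1..k}" "q = T ! (r - 1)"
    using mem_set_pbw_column_iff by blast
  then have "T ! (r - 1) = r"
    using q pbw_column_unfixed_greater[OF r(1)] by fastforce
  then show "T ! (q - 1) = q"
    using r by simp
next
  assume "T ! (q - 1) = q"
  then show "q \<in> set T"
    using q mem_set_pbw_column_iff by metis
qed

lemma pbw_column_nth_inj:
  assumes "p1 \<in> {1..k}" "p2 \<in> {1..k}" "T ! (p1 - 1) = T ! (p2 - 1)"
  shows "p1 = p2"
proof -
  have False if ab: "a \<in> {1..k}" "b \<in> {1..k}" "a < b" and eq: "T ! (a - 1) = T ! (b - 1)" for a b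
  proof (cases "T ! (a - 1) = a")
    case True
    then have "T ! (b - 1) \<noteq> b"
      using ab eq by simp
    then show False
      using pbw_column_unfixed_greater[OF ab(2)] True eq ab(1) by simp
  next
    case False
    then show False
      using pbw_column_unfixed_decreasing[OF ab False] eq by simp
  qed
  then show ?thesis
    using assms by (metis linorder_neqE_nat)
qed

lemma distinct_pbw_column: "distinct T"
proof -
  have "T ! i \<noteq> T ! j" if "i < k" "j < k" "i \<noteq> j" for i j
  proof
    assume "T ! i = T ! j"
    then have "Suc i = Suc j"
      using that pbw_column_nth_inj[of "Suc i" "Suc j"] by simp
    then show False
      using that(3) by simp
  qed
  then show ?thesis
    by (simp add: distinct_conv_nth length_pbw_column)
qed

lemma card_greater_pbw_column_nth:
  assumes p: "p \<in> {1..k}" "T ! (p - 1) \<noteq> p"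
  shows "card {x \<in> set T. T ! (p - 1) < x} = card {q \<in> {1..<p}. q \<notin> set T}"
proof -
  have "{x \<in> set T. T ! (p - 1) < x} = (\<lambda>q. T ! (q - 1)) ` {q \<in> {1..<p}. q \<notin> set T}"
  proof (intro equalityI subsetI)
    fix x assume x: "x \<in> {x \<in> set T. T ! (p - 1) < x}"
    then obtain r where r: "r \<in> {1..k}" "x = T ! (r - 1)"
      using mem_set_pbw_column_iff by blast
    have "r \<noteq> p"
      using x r by auto
    moreover have "\<not> p < r"
      using x r pbw_column_unfixed_decreasing[OF p(1) r(1) _ p(2)] by auto
    ultimately have "r < p"
      by linarith
    have "k < x"
      using x pbw_column_unfixed_greater[OF p] by simp
    then have "r \<notin> set T"
      using r pbw_column_fixed_iff[OF r(1)] by auto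
    then show "x \<in> (\<lambda>q. T ! (q - 1)) ` {q \<in> {1..<p}. q \<notin> set T}"
      using r \<open>r < p\<close> by auto
  next
    fix x assume "x \<in> (\<lambda>q. T ! (q - 1)) ` {q \<in> {1..<p}. q \<notin> set T}"
    then obtain q where q: "q \<in> {1..<p}" "q \<notin> set T" "x = T ! (q - 1)"
      by blast
    have qk: "q \<in> {1..k}"
      using p q(1) by auto
    then have "T ! (q - 1) \<noteq> q"
      using q(2) pbw_column_fixed_iff by blast
    then have "T ! (p - 1) < x"
      using pbw_column_unfixed_decreasing[OF qk p(1)] q by simp
    moreover have "x \<in> set T"
      using qk q(3) mem_set_pbw_column_iff by blast
    ultimately show "x \<in> {x \<in> set T. T ! (p - 1) < x}"
      by simp
  qed
  moreover have "inj_on (\<lambda>q. T ! (q - 1)) {q \<in> {1..<p}. q \<notin> set T}"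
  proof (rule inj_onI)
    fix q q' assume "q \<in> {q \<in> {1..<p}. q \<notin> set T}" "q' \<in> {q \<in> {1..<p}. q \<notin> set T}"
      and eq: "T ! (q - 1) = T ! (q' - 1)"
    then have "q \<in> {1..k}" "q' \<in> {1..k}"
      using p(1) by auto
    then show "q = q'"
      using eq pbw_column_nth_inj by blast
  qed
  ultimately show ?thesis
    by (simp add: card_image)
qed


lemma set_pbw_column_subset: "set T \<subseteq> {1..2 * n}"
proof
  fix x assume "x \<in> set T"
  then obtain p where "p \<in> {1..k}" "x = T ! (p - 1)"
    using mem_set_pbw_column_iff by blast
  then show "x \<in> {1..2 * n}"
    using pbw_column_nth_range by simp
qed

lemma card_greater_bar_pbw_column:
  assumes "k \<le> n" and i: "i \<in> {1..<k}" "i \<in> set T" "bar n i \<in> set T"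
  shows "card {x \<in> set T. bar n i < x} < card {q \<in> {1..<i}. q \<notin> set T}"
proof -
  obtain i' where i': "i' \<in> {1..k}" "bar n i = T ! (i' - 1)"
    using i(3) mem_set_pbw_column_iff by blast
  have "T ! (i - 1) = i"
    using i(1,2) pbw_column_fixed_iff by simp
  then have "i' < i"
    using pbw_column_bar_above[OF i(1) _ i'(1)] i'(2) by simp
  have "k < bar n i"
    using i(1) \<open>k \<le> n\<close> by (auto simp: bar_def)
  then have unfixed: "T ! (i' - 1) \<noteq> i'" "i' \<notin> set T"
    using i' pbw_column_fixed_iff[OF i'(1)] by auto
  have "card {x \<in> set T. bar n i < x} = card {q \<in> {1..<i'}. q \<notin> set T}"
    using card_greater_pbw_column_nth[OF i'(1) unfixed(1)] i'(2) by simp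
  also have "\<dots> < card {q \<in> {1..<i}. q \<notin> set T}"
    using card_missing_below_strict_mono[OF _ \<open>i' < i\<close> unfixed(2)] i'(1) by simp
  finally show ?thesis .
qed

end

text \<open>Condition (iii) read off the entry set: the entry bar i stands in the (c+1)-st row
  not fixed by (i), where c counts the entries larger than bar i, so it lies above row i iff c is
  smaller than the number of such rows above i.\<close>

definition pbw_entry_set :: "nat \<Rightarrow> nat \<Rightarrow> nat set \<Rightarrow> bool" where
  "pbw_entry_set n k S \<longleftrightarrow> S \<subseteq> {1..2 * n} \<and> card S = k \<and>
     (\<forall>i \<in> {1..<k}. i \<in> S \<and> bar n i \<in> S \<longrightarrow>
        card {x \<in> S. bar n i < x} < card {q \<in> {1..<i}. q \<notin> S})"

definition column_of_set :: "nat \<Rightarrow> nat set \<Rightarrow> nat list" where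
  "column_of_set k S = map (\<lambda>p. if p \<in> S then p
      else rev (sorted_list_of_set {x \<in> S. k < x}) ! card {q \<in> {1..<p}. q \<notin> S}) [1..<k + 1]"

lemma length_column_of_set: "length (column_of_set k S) = k"
  by (simp add: column_of_set_def)

lemma nth_column_of_set:
  assumes "p \<in> {1..k}"
  shows "column_of_set k S ! (p - 1) = (if p \<in> S then p
      else rev (sorted_list_of_set {x \<in> S. k < x}) ! card {q \<in> {1..<p}. q \<notin> S})"
proof -
  have "p - 1 < length [1..<k + 1]" "[1..<k + 1] ! (p - 1) = p"
    using assms by (auto simp del: upt_Suc)
  then show ?thesis
    by (simp add: column_of_set_def del: upt_Suc)
qed

lemma pbw_entry_set_set_pbw_column:
  assumes "pbw_column n k T" "k \<le> n"
  shows "pbw_entry_set n k (set T)"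
  using set_pbw_column_subset[OF assms(1)] distinct_card[OF distinct_pbw_column[OF assms(1)]]
    length_pbw_column[OF assms(1)] card_greater_bar_pbw_column[OF assms]
  unfolding pbw_entry_set_def by auto

lemma pbw_column_eq_column_of_set:
  assumes column: "pbw_column n k T"
  shows "T = column_of_set k (set T)"
proof (rule nth_equalityI)
  show "length T = length (column_of_set k (set T))"
    by (simp add: length_column_of_set length_pbw_column[OF column])
next
  fix j assume "j < length T"
  then have p: "Suc j \<in> {1..k}"
    using length_pbw_column[OF column] by auto
  define L where "L = {x \<in> set T. k < x}"
  show "T ! j = column_of_set k (set T) ! j"
  proof (cases "Suc j \<in> set T")
    case True
    then show ?thesis
      using nth_column_of_set[OF p] pbw_column_fixed_iff[OF column p] by simp
  next
    case False
    then have unfixed: "T ! (Suc j - 1) \<noteq> Suc j"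
      using pbw_column_fixed_iff[OF column p] by simp
    have "k < T ! j"
      using pbw_column_unfixed_greater[OF column p unfixed] by simp
    then have "T ! j \<in> L" "{x \<in> L. T ! j < x} = {x \<in> set T. T ! j < x}"
      using \<open>j < length T\<close> by (auto simp: L_def)
    then have "rev (sorted_list_of_set L) ! card {q \<in> {1..<Suc j}. q \<notin> set T} = T ! j"
      using rev_sorted_list_of_set_nth_card_greater[of L "T ! j"]
        card_greater_pbw_column_nth[OF column p unfixed] by (simp add: L_def)
    then show ?thesis
      using nth_column_of_set[OF p] False by (simp add: L_def)
  qed
qed

context
  fixes n k :: nat and S :: "nat set"
  assumes entry_set: "pbw_entry_set n k S" and "k \<le> n"
begin

lemma card_large_entries: "card {x \<in> S. k < x} = card ({1..k} - S)"
proof -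
  have S: "S \<subseteq> {1..2 * n}" "card S = k"
    using entry_set by (auto simp: pbw_entry_set_def)
  then have "finite S"
    using finite_subset by blast
  have "card (S \<inter> {1..k} \<union> {x \<in> S. k < x}) = card (S \<inter> {1..k}) + card {x \<in> S. k < x}"
    by (rule card_Un_disjoint) (use \<open>finite S\<close> in auto)
  moreover have "S \<inter> {1..k} \<union> {x \<in> S. k < x} = S"
    using S(1) by auto
  ultimately have "card S = card (S \<inter> {1..k}) + card {x \<in> S. k < x}"
    by simp
  moreover have "card ({1..k} - S) = k - card (S \<inter> {1..k})"
    by (simp add: card_Diff_subset_Int Int_commute)
  ultimately show ?thesis
    using S(2) by simp
qed

lemma card_missing_below_less_card_large_entries:
  assumes "p \<in> {1..k}" "p \<notin> S"
  shows "card {q \<in> {1..<p}. q \<notin> S} < card {x \<in> S. k < x}"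
proof -
  have "{q \<in> {1..<p}. q \<notin> S} \<subseteq> {1..k} - S" "p \<in> {1..k} - S" "p \<notin> {q \<in> {1..<p}. q \<notin> S}"
    using assms by auto
  then have "{q \<in> {1..<p}. q \<notin> S} \<subset> {1..k} - S"
    by blast
  then show ?thesis
    using card_large_entries psubset_card_mono[of "{1..k} - S"] by simp
qed

lemma column_of_set_unfixed:
  assumes p: "p \<in> {1..k}" "p \<notin> S"
  shows "column_of_set k S ! (p - 1) \<in> S" "k < column_of_set k S ! (p - 1)"
    "card {x \<in> S. column_of_set k S ! (p - 1) < x} = card {q \<in> {1..<p}. q \<notin> S}"
proof -
  let ?L = "{x \<in> S. k < x}" and ?r = "card {q \<in> {1..<p}. q \<notin> S}"
  have "finite S"
    using entry_set finite_subset by (auto simp: pbw_entry_set_def)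
  then have L: "finite ?L" "?r < card ?L"
    using card_missing_below_less_card_large_entries[OF p] by simp_all
  have entry: "column_of_set k S ! (p - 1) = rev (sorted_list_of_set ?L) ! ?r"
    using nth_column_of_set[OF p(1)] p(2) by simp
  have "rev (sorted_list_of_set ?L) ! ?r \<in> ?L"
    using L nth_mem[of ?r "rev (sorted_list_of_set ?L)"] by simp
  then show "column_of_set k S ! (p - 1) \<in> S" "k < column_of_set k S ! (p - 1)"
    using entry by simp_all
  then have "{x \<in> S. column_of_set k S ! (p - 1) < x} = {x \<in> ?L. column_of_set k S ! (p - 1) < x}"
    by auto
  then show "card {x \<in> S. column_of_set k S ! (p - 1) < x} = ?r"
    using card_greater_rev_sorted_list_of_set_nth[OF L] entry by simp
qed

lemma column_of_set_unfixed_decreasing: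
  assumes p1: "p1 \<in> {1..k}" "p1 \<notin> S" and p2: "p2 \<in> {1..k}" "p2 \<notin> S" and "p1 < p2"
  shows "column_of_set k S ! (p2 - 1) < column_of_set k S ! (p1 - 1)"
proof (rule ccontr)
  let ?x1 = "column_of_set k S ! (p1 - 1)" and ?x2 = "column_of_set k S ! (p2 - 1)"
  assume "\<not> ?x2 < ?x1"
  then have "{x \<in> S. ?x2 < x} \<subseteq> {x \<in> S. ?x1 < x}"
    by auto
  moreover have "finite S"
    using entry_set finite_subset by (auto simp: pbw_entry_set_def)
  ultimately have "card {x \<in> S. ?x2 < x} \<le> card {x \<in> S. ?x1 < x}"
    by (simp add: card_mono)
  then show False
    using column_of_set_unfixed(3)[OF p1] column_of_set_unfixed(3)[OF p2]
      card_missing_below_strict_mono[OF _ \<open>p1 < p2\<close> p1(2)] p1(1) by simp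
qed

lemma column_of_set_fixed_or_large:
  assumes "p \<in> {1..k}"
  shows "column_of_set k S ! (p - 1) = p \<and> p \<in> S \<or> k < column_of_set k S ! (p - 1) \<and> p \<notin> S"
  using nth_column_of_set[OF assms] column_of_set_unfixed(2)[OF assms] by (cases "p \<in> S") auto

lemma set_column_of_set_subset: "set (column_of_set k S) \<subseteq> S"
proof
  fix x assume "x \<in> set (column_of_set k S)"
  then obtain j where "j < k" "x = column_of_set k S ! (Suc j - 1)"
    by (auto simp: in_set_conv_nth length_column_of_set)
  then show "x \<in> S"
    using column_of_set_fixed_or_large[of "Suc j"] column_of_set_unfixed(1)[of "Suc j"] by auto
qed

lemma column_of_set_decreasing:
  assumes p1: "p1 \<in> {1..k}" and p2: "p2 \<in> {1..k}" and "p1 < p2"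
    and unfixed: "column_of_set k S ! (p1 - 1) \<noteq> p1"
  shows "column_of_set k S ! (p2 - 1) < column_of_set k S ! (p1 - 1)"
proof -
  have large: "k < column_of_set k S ! (p1 - 1)" "p1 \<notin> S"
    using column_of_set_fixed_or_large[OF p1] unfixed by auto
  show ?thesis
  proof (cases "p2 \<in> S")
    case True
    then show ?thesis
      using column_of_set_fixed_or_large[OF p2] large(1) p2 by auto
  next
    case False
    show ?thesis
      using column_of_set_unfixed_decreasing[OF p1 large(2) p2 False \<open>p1 < p2\<close>] .
  qed
qed

lemma column_of_set_bar_above:
  assumes i: "i \<in> {1..<k}" "column_of_set k S ! (i - 1) = i"
    and i': "i' \<in> {1..k}" "column_of_set k S ! (i' - 1) = bar n i"
  shows "i' < i"
proof -
  have "i \<in> S"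
    using column_of_set_fixed_or_large[of i] i by auto
  have "k < bar n i"
    using i(1) \<open>k \<le> n\<close> by (auto simp: bar_def)
  then have "i' \<notin> S"
    using column_of_set_fixed_or_large[OF i'(1)] i' by auto
  then have "bar n i \<in> S"
    and count: "card {x \<in> S. bar n i < x} = card {q \<in> {1..<i'}. q \<notin> S}"
    using column_of_set_unfixed[OF i'(1)] i'(2) by simp_all
  then have "card {q \<in> {1..<i'}. q \<notin> S} < card {q \<in> {1..<i}. q \<notin> S}"
    using entry_set i(1) \<open>i \<in> S\<close> unfolding pbw_entry_set_def by auto
  moreover have "card {q \<in> {1..<i}. q \<notin> S} \<le> card {q \<in> {1..<i'}. q \<notin> S}" if "i \<le> i'"
    using that by (intro card_mono) auto
  ultimately show ?thesis
    by (meson not_le order.strict_iff_not)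
qed

lemma pbw_column_column_of_set: "pbw_column n k (column_of_set k S)"
  unfolding pbw_column_def
proof (intro conjI ballI impI)
  fix i assume "i \<in> {1..k}"
  then have "column_of_set k S ! (i - 1) \<in> set (column_of_set k S)"
    by (intro nth_mem) (auto simp: length_column_of_set)
  then show "column_of_set k S ! (i - 1) \<in> {1..2 * n}"
    using set_column_of_set_subset entry_set unfolding pbw_entry_set_def by blast
next
  fix i assume "i \<in> {1..k}" "column_of_set k S ! (i - 1) \<le> k"
  then show "column_of_set k S ! (i - 1) = i"
    using column_of_set_fixed_or_large by fastforce
next
  fix i i' assume "i \<in> {1..k}" "i' \<in> {1..k}"
    and "i < k \<and> column_of_set k S ! (i - 1) = i \<and> column_of_set k S ! (i' - 1) = bar n i"
  then show "i' < i"
    using column_of_set_bar_above[of i i'] by simp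
qed (use length_column_of_set column_of_set_decreasing in auto)

lemma set_column_of_set: "set (column_of_set k S) = S"
proof (rule card_subset_eq)
  show "finite S"
    using entry_set finite_subset by (auto simp: pbw_entry_set_def)
  show "card (set (column_of_set k S)) = card S"
    using distinct_card[OF distinct_pbw_column[OF pbw_column_column_of_set]] entry_set
    by (simp add: length_column_of_set pbw_entry_set_def)
qed (rule set_column_of_set_subset)

end

lemma reverse_admissible_iff_pbw_entry_set:
  assumes M: "(I2, I1) \<in> minors n k" and "k \<le> n"
  shows "reverse_admissible n (I2, I1) \<longleftrightarrow> pbw_entry_set n k (minor_entries n (I2, I1))"
proof -
  have I: "I1 \<subseteq> {1..n}" "I2 \<subseteq> {1..n}"
    using M by (auto simp: minors_def)
  have "i \<in> minor_entries n (I2, I1) \<and> bar n i \<in> minor_entries n (I2, I1) \<longleftrightarrow> i \<in> I1 \<inter> I2"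
    if "i \<in> {1..<k}" for i
    using that \<open>k \<le> n\<close> mem_minor_entries_iff[OF I, of i] bar_mem_minor_entries_iff[OF I, of i] by auto
  then have "pbw_entry_set n k (minor_entries n (I2, I1)) \<longleftrightarrow>
      (\<forall>i \<in> {1..<k}. i \<in> I1 \<inter> I2 \<longrightarrow> card {x \<in> I1. x \<le> i} + card {x \<in> I2. x \<le> i} \<le> i)"
    using M minor_entries_subset[OF I] card_minor_entries[OF I] pbw_condition_minor_entries_iff[OF I]
    unfolding pbw_entry_set_def minors_def by auto
  also have "\<dots> \<longleftrightarrow> reverse_admissible n (I2, I1)"
    using reverse_admissible_iff_card_le[OF M] I(1) by auto
  finally show ?thesis ..
qed

lemma bij_betw_minor_entries_rev_adm_minors:
  assumes "k \<le> n"
  shows "bij_betw (minor_entries n) (rev_adm_minors n k) {S. pbw_entry_set n k S}"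
proof (rule bij_betw_subset[OF bij_betw_minor_entries])
  show "rev_adm_minors n k \<subseteq> minors n k"
    by (auto simp: rev_adm_minors_def)
  have equiv: "M \<in> rev_adm_minors n k \<longleftrightarrow> pbw_entry_set n k (minor_entries n M)"
    if "M \<in> minors n k" for M
    using that reverse_admissible_iff_pbw_entry_set[OF _ assms]
    by (cases M) (auto simp: rev_adm_minors_def simp del: minor_entries.simps)
  show "minor_entries n ` rev_adm_minors n k = {S. pbw_entry_set n k S}"
  proof (intro equalityI subsetI)
    fix S assume "S \<in> minor_entries n ` rev_adm_minors n k"
    then show "S \<in> {S. pbw_entry_set n k S}"
      using equiv by (auto simp: rev_adm_minors_def simp del: minor_entries.simps)
  next
    fix S assume "S \<in> {S. pbw_entry_set n k S}"
    then have "S \<in> {S. S \<subseteq> {1..2 * n} \<and> card S = k}"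
      by (simp add: pbw_entry_set_def)
    then have "S \<in> minor_entries n ` minors n k"
      using bij_betw_imp_surj_on[OF bij_betw_minor_entries] by simp
    then obtain M where "M \<in> minors n k" "S = minor_entries n M"
      by blast
    then show "S \<in> minor_entries n ` rev_adm_minors n k"
      using equiv \<open>S \<in> {S. pbw_entry_set n k S}\<close> by blast
  qed
qed

lemma bij_betw_set_pbw_columns:
  assumes "k \<le> n"
  shows "bij_betw set (pbw_columns n k) {S. pbw_entry_set n k S}"
  unfolding bij_betw_def
proof
  show "inj_on set (pbw_columns n k)"
    using pbw_column_eq_column_of_set by (intro inj_onI) (metis mem_Collect_eq pbw_columns_def)
  have "S \<in> set ` pbw_columns n k" if "pbw_entry_set n k S" for S
    using set_column_of_set[OF that assms] pbw_column_column_of_set[OF that assms]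
    by (auto simp: pbw_columns_def)
  then show "set ` pbw_columns n k = {S. pbw_entry_set n k S}"
    using pbw_entry_set_set_pbw_column[OF _ assms] by (auto simp: pbw_columns_def)
qed

lemma column_weight_eq_minor_weight:
  assumes "I1 \<subseteq> {1..n}" "I2 \<subseteq> {1..n}" and "set T = minor_entries n (I2, I1)"
  shows "column_weight n T = minor_weight n (I2, I1)"
proof
  fix j
  show "column_weight n T j = minor_weight n (I2, I1) j"
    using mem_minor_entries_iff[OF assms(1,2), of j] bar_mem_minor_entries_iff[OF assms(1,2), of j] assms(3)
    by (simp add: column_weight_def minor_weight_def del: minor_entries.simps)
qed

theorem proposition4p10:
  fixes n k :: nat
  assumes "n \<ge> 1" and "1 \<le> k" and "k \<le> n"
  shows "\<exists>f. bij_betw f (rev_adm_minors n k) (pbw_columns n k) \<and>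
             (\<forall>M \<in> rev_adm_minors n k. column_weight n (f M) = minor_weight n M)"
proof (intro exI conjI ballI)
  let ?f = "the_inv_into (pbw_columns n k) set \<circ> minor_entries n"
  have columns: "bij_betw set (pbw_columns n k) {S. pbw_entry_set n k S}"
    using bij_betw_set_pbw_columns[OF \<open>k \<le> n\<close>] .
  show "bij_betw ?f (rev_adm_minors n k) (pbw_columns n k)"
    using bij_betw_trans[OF bij_betw_minor_entries_rev_adm_minors[OF \<open>k \<le> n\<close>]
        bij_betw_the_inv_into[OF columns]] .
  fix M assume M: "M \<in> rev_adm_minors n k"
  then have "set (?f M) = minor_entries n M"
    using f_the_inv_into_f_bij_betw[OF columns] bij_betw_apply[OF bij_betw_minor_entries_rev_adm_minors[OF \<open>k \<le> n\<close>]]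
    by simp
  then show "column_weight n (?f M) = minor_weight n M"
    using M column_weight_eq_minor_weight by (cases M) (auto simp: rev_adm_minors_def minors_def)
qed

end
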